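(* Let $I$ be a resident-minimal and hospital-complete instance and $J$ a simple extension of $I$. Let $P=\mathrm{prop}(J)\setminus\mathrm{prop}(I)$ and $X=\mathrm{rej}(J)\setminus\mathrm{rej}(I)$. Then: (P1) $P\cap\mathrm{prop}(I)=\emptyset$; (P2) for each $r\in R$ there is at most one $h\in H$ with $(r,h)\in P$; (P3) $X\subseteq\mathrm{tent}(I)$; (P4) $\mathrm{res}\,P\cap\mathrm{res}\,\mathrm{tent}(I)\subseteq\mathrm{res}\,X$; (P5) for each $h\in H$, $|\mathrm{res}_h(P\cup(\mathrm{tent}(I)\setminus X))|\le q_h$, and if $\mathrm{res}_h X$ is non-empty then $|\mathrm{res}_h(P\cup(\mathrm{tent}(I)\setminus X))|=q_h$; (P6) for each $h\in H$, each member of $\mathrm{res}_h(P\cup(\mathrm{tent}(I)\setminus X))$ precedes all members of $\mathrm{res}_h X$ in the preference list of $h$ in $I$.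
   Context: An instance $I$ consists of finite disjoint sets $R$ (residents) and $H$ (hospitals), a positive integer quota $q_h$ for each $h\in H$, for each $r\in R$ a preference list of $r$ (a sequence of distinct members of $H$, not necessarily all), and for each $h\in H$ a preference list of $h$ (a sequence of distinct members of $R$). A list is complete if it contains every member of the opposite side; an instance is hospital-complete if every hospital's list is complete. A match is a pair $(r,h)\in R\times H$. For a set $M$ of matches, $\mathrm{res}_h M=\{r:(r,h)\in M\}$, $\mathrm{res}\,M=\{r:(r,h)\in M\text{ for some }h\}$. $J$ is an extension of $I$ (same $R,H$, quotas) if every list of $J$ has the corresponding list of $I$ as a prefix. An event is $(r,h)^+$ (proposal) or $(r,h)^-$ (rejection). For an event sequence $\sigma$, $\mathrm{prop}(\sigma)$, $\mathrm{rej}(\sigma)$ are the sets of matches proposed/rejected in $\sigma$ and $\mathrm{tent}(\sigma)=\mathrm{prop}(\sigma)\setminus\mathrm{rej}(\sigma)$. A match $(r,h)\in M$ is ousted from $M$ in $I$ if the list of $h$ in $I$ contains at least $q_h$ residents of $\mathrm{res}_h M$ and either $r$ is not on it or $r$ is preceded on it by at least $q_h$ residents of $\mathrm{res}_h M$. $I$-feasible sequences: the empty sequence is $I$-feasible; if $\sigma$ is $I$-feasible then $\sigma+(r,h)^+$ is $I$-feasible if $r\notin\mathrm{res}\,\mathrm{tent}(\sigma)$, $(r,h)\notin\mathrm{prop}(\sigma)$, $h$ is on the list of $r$ in $I$ and $(r,h')\in\mathrm{rej}(\sigma)$ for every $h'$ preceding $h$ on it; and $\sigma+(r,h)^-$ is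 $I$-feasible if $(r,h)$ is ousted from $\mathrm{prop}(\sigma)$ in $I$ and $(r,h)\notin\mathrm{rej}(\sigma)$. All maximal $I$-feasible sequences contain the same events; $\mathrm{prop}(I),\mathrm{rej}(I),\mathrm{tent}(I)$ denote $\mathrm{prop}(\sigma),\mathrm{rej}(\sigma),\mathrm{tent}(\sigma)$ for any maximal $I$-feasible $\sigma$. $I$ is resident-minimal if $\mathrm{prop}(I)$ equals the set of matches $(r,h)$ with $h$ on the list of $r$ in $I$. An extension $J$ of $I$ is simple if $(\mathrm{prop}(J)\setminus\mathrm{prop}(I))\cap(\mathrm{rej}(J)\setminus\mathrm{rej}(I))=\emptyset$. *)

theory Defs
  imports Main "HOL-Library.Sublist"
begin

record ('r,'h) inst =
  Res :: "'r set"
  Hos :: "'h set"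
  quota :: "'h \<Rightarrow> nat"
  rlist :: "'r \<Rightarrow> 'h list"
  hlist :: "'h \<Rightarrow> 'r list"

definition wf_inst :: "('r,'h) inst \<Rightarrow> bool" where
  "wf_inst I \<longleftrightarrow> finite (Res I) \<and> finite (Hos I)
     \<and> (\<forall>h\<in>Hos I. quota I h > 0)
     \<and> (\<forall>r\<in>Res I. distinct (rlist I r) \<and> set (rlist I r) \<subseteq> Hos I)
     \<and> (\<forall>h\<in>Hos I. distinct (hlist I h) \<and> set (hlist I h) \<subseteq> Res I)"

definition precedes :: "'a list \<Rightarrow> 'a \<Rightarrow> 'a \<Rightarrow> bool" where
  "precedes xs a b \<longleftrightarrow> (\<exists>i j. i < j \<and> j < length xs \<and> xs ! i = a \<and> xs ! j = b)"

definition hospital_complete :: "('r,'h) inst \<Rightarrow> bool" where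
  "hospital_complete I \<longleftrightarrow> (\<forall>h\<in>Hos I. set (hlist I h) = Res I)"

definition res_h :: "('r \<times> 'h) set \<Rightarrow> 'h \<Rightarrow> 'r set" where
  "res_h M h = {r. (r,h) \<in> M}"

definition res :: "('r \<times> 'h) set \<Rightarrow> 'r set" where
  "res M = {r. \<exists>h. (r,h) \<in> M}"

definition is_extension :: "('r,'h) inst \<Rightarrow> ('r,'h) inst \<Rightarrow> bool" where
  "is_extension J I \<longleftrightarrow> Res J = Res I \<and> Hos J = Hos I \<and> quota J = quota I
     \<and> (\<forall>r\<in>Res I. prefix (rlist I r) (rlist J r))
     \<and> (\<forall>h\<in>Hos I. prefix (hlist I h) (hlist J h))"

datatype ('r,'h) event = PropE 'r 'h | RejE 'r 'h

definition props :: "('r,'h) event list \<Rightarrow> ('r \<times> 'h) set" where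
  "props \<sigma> = {(r,h). PropE r h \<in> set \<sigma>}"

definition rejs :: "('r,'h) event list \<Rightarrow> ('r \<times> 'h) set" where
  "rejs \<sigma> = {(r,h). RejE r h \<in> set \<sigma>}"

definition tents :: "('r,'h) event list \<Rightarrow> ('r \<times> 'h) set" where
  "tents \<sigma> = props \<sigma> - rejs \<sigma>"

definition ousted :: "('r,'h) inst \<Rightarrow> ('r \<times> 'h) set \<Rightarrow> 'r \<Rightarrow> 'h \<Rightarrow> bool" where
  "ousted I M r h \<longleftrightarrow> (r,h) \<in> M
     \<and> card (set (hlist I h) \<inter> res_h M h) \<ge> quota I h
     \<and> (r \<notin> set (hlist I h)
        \<or> card (set (takeWhile (\<lambda>x. x \<noteq> r) (hlist I h)) \<inter> res_h M h) \<ge> quota I h)"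

inductive feasible :: "('r,'h) inst \<Rightarrow> ('r,'h) event list \<Rightarrow> bool" for I where
  feas_Nil: "feasible I []"
| feas_Prop: "\<lbrakk> feasible I \<sigma>; r \<in> Res I; h \<in> Hos I; r \<notin> res (tents \<sigma>); (r,h) \<notin> props \<sigma>;
     h \<in> set (rlist I r); \<forall>h'. precedes (rlist I r) h' h \<longrightarrow> (r,h') \<in> rejs \<sigma> \<rbrakk>
     \<Longrightarrow> feasible I (\<sigma> @ [PropE r h])"
| feas_Rej: "\<lbrakk> feasible I \<sigma>; ousted I (props \<sigma>) r h; (r,h) \<notin> rejs \<sigma> \<rbrakk>
     \<Longrightarrow> feasible I (\<sigma> @ [RejE r h])"

definition maximal_feasible :: "('r,'h) inst \<Rightarrow> ('r,'h) event list \<Rightarrow> bool" where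
  "maximal_feasible I \<sigma> \<longleftrightarrow> feasible I \<sigma> \<and> \<not> (\<exists>e. feasible I (\<sigma> @ [e]))"

definition propI :: "('r,'h) inst \<Rightarrow> ('r \<times> 'h) set" where
  "propI I = props (SOME \<sigma>. maximal_feasible I \<sigma>)"

definition rejI :: "('r,'h) inst \<Rightarrow> ('r \<times> 'h) set" where
  "rejI I = rejs (SOME \<sigma>. maximal_feasible I \<sigma>)"

definition tentI :: "('r,'h) inst \<Rightarrow> ('r \<times> 'h) set" where
  "tentI I = tents (SOME \<sigma>. maximal_feasible I \<sigma>)"

definition resident_minimal :: "('r,'h) inst \<Rightarrow> bool" where
  "resident_minimal I \<longleftrightarrow> propI I = {(r,h). r \<in> Res I \<and> h \<in> set (rlist I r)}"

definition simple_extension :: "('r,'h) inst \<Rightarrow> ('r,'h) inst \<Rightarrow> bool" where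
  "simple_extension J I \<longleftrightarrow> is_extension J I
     \<and> (propI J - propI I) \<inter> (rejI J - rejI I) = {}"

end

theory Submission
  imports Defs
begin

text \<open>Every I-feasible event sequence stays feasible for an extension J (lists only grow at
  the end), and a maximal sequence dominates every feasible one; hence prop(I) \<subseteq> prop(J) and
  rej(I) \<subseteq> rej(J), and simplicity gives tent(J) = P \<union> (tent(I) - X). Properties (P5) and (P6)
  are then the quota and preference properties of tent(J) at a hospital: as soon as it has
  rejected someone, a hospital tentatively holds exactly the first q of its proposers.
  (P2) and (P4) hold because a resident proposes to a hospital only after being rejected by all
  earlier ones, and such a rejection of a new proposal, or (by resident-minimality) of a
  tentative match of I, is a new rejection.\<close>

definition ahead :: "'a list \<Rightarrow> 'a set \<Rightarrow> 'a \<Rightarrow> nat" where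
  "ahead xs S a = card (set (takeWhile (\<lambda>x. x \<noteq> a) xs) \<inter> S)"

lemma takeWhile_neq_nth:
  "distinct xs \<Longrightarrow> j < length xs \<Longrightarrow> takeWhile (\<lambda>x. x \<noteq> xs ! j) xs = take j xs"
  by (rule takeWhile_eq_take_P_nth) (auto simp: nth_eq_iff_index_eq)

lemma precedes_iff_takeWhile:
  assumes "distinct xs" "b \<in> set xs"
  shows "precedes xs a b \<longleftrightarrow> a \<in> set (takeWhile (\<lambda>x. x \<noteq> b) xs)"
proof -
  obtain j where j: "j < length xs" "xs ! j = b" using assms(2) by (auto simp: in_set_conv_nth)
  have "precedes xs a b \<longleftrightarrow> (\<exists>i<j. xs ! i = a)"
    using j assms(1) by (auto simp: precedes_def nth_eq_iff_index_eq)
  also have "\<dots> \<longleftrightarrow> a \<in> set (take j xs)"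
    using j by (auto simp: in_set_conv_nth)
  finally show ?thesis using takeWhile_neq_nth[OF assms(1) j(1)] j(2) by simp
qed

lemma precedes_total:
  assumes "a \<in> set xs" "b \<in> set xs" "a \<noteq> b"
  shows "precedes xs a b \<or> precedes xs b a"
proof -
  obtain i j where "i < length xs" "xs ! i = a" "j < length xs" "xs ! j = b"
    using assms(1,2) by (auto simp: in_set_conv_nth)
  then show ?thesis using assms(3) unfolding precedes_def by (metis linorder_neqE_nat)
qed

lemma precedes_prefix_iff:
  assumes "prefix ys xs" "distinct xs" "b \<in> set ys"
  shows "precedes xs a b \<longleftrightarrow> precedes ys a b"
proof -
  obtain zs where xs: "xs = ys @ zs" using assms(1) by (auto simp: prefix_def)
  then have "distinct ys" using assms(2) by simp
  then show ?thesis using assms xs by (simp add: precedes_iff_takeWhile)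
qed

lemma precedes_beyond_prefix:
  assumes "prefix ys xs" "distinct xs" "a \<in> set ys" "b \<in> set xs" "b \<notin> set ys"
  shows "precedes xs a b"
proof -
  obtain zs where xs: "xs = ys @ zs" using assms(1) by (auto simp: prefix_def)
  have "takeWhile (\<lambda>x. x \<noteq> b) xs = ys @ takeWhile (\<lambda>x. x \<noteq> b) zs"
    unfolding xs by (rule takeWhile_append2) (use assms(5) in auto)
  then show ?thesis using assms by (simp add: precedes_iff_takeWhile)
qed

lemma takeWhile_neq_subset:
  "a \<notin> set (takeWhile (\<lambda>x. x \<noteq> b) xs) \<Longrightarrow>
   set (takeWhile (\<lambda>x. x \<noteq> b) xs) \<subseteq> set (takeWhile (\<lambda>x. x \<noteq> a) xs)"
  by (induction xs) auto

lemma precedes_if_ahead_less: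
  assumes "distinct xs" "b \<in> set xs" "ahead xs S a < ahead xs S b"
  shows "precedes xs a b"
proof (rule ccontr)
  assume "\<not> precedes xs a b"
  then have "set (takeWhile (\<lambda>x. x \<noteq> b) xs) \<subseteq> set (takeWhile (\<lambda>x. x \<noteq> a) xs)"
    using assms(1,2) by (simp add: precedes_iff_takeWhile takeWhile_neq_subset)
  then have "ahead xs S b \<le> ahead xs S a"
    unfolding ahead_def by (intro card_mono) auto
  then show False using assms(3) by simp
qed

lemma filter_takeWhile_neq:
  "P a \<Longrightarrow> filter P (takeWhile (\<lambda>x. x \<noteq> a) xs) = takeWhile (\<lambda>x. x \<noteq> a) (filter P xs)"
  by (induction xs) auto

lemma set_take_eq_takeWhile_less:
  "distinct ys \<Longrightarrow> {a \<in> set ys. length (takeWhile (\<lambda>x. x \<noteq> a) ys) < q} = set (take q ys)"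
proof (induction ys arbitrary: q)
  case (Cons y ys)
  then show ?case by (cases q) auto
qed simp

lemma card_ahead_less:
  assumes "distinct xs" "S \<subseteq> set xs" "q \<le> card S"
  shows "card {a \<in> S. ahead xs S a < q} = q"
proof -
  define ys where "ys = filter (\<lambda>x. x \<in> S) xs"
  have ys: "set ys = S" "distinct ys" using assms(1,2) by (auto simp: ys_def)
  have "ahead xs S a = length (takeWhile (\<lambda>x. x \<noteq> a) ys)" if "a \<in> S" for a
  proof -
    have "set (takeWhile (\<lambda>x. x \<noteq> a) xs) \<inter> S
        = set (filter (\<lambda>x. x \<in> S) (takeWhile (\<lambda>x. x \<noteq> a) xs))"
      by auto
    also have "\<dots> = set (takeWhile (\<lambda>x. x \<noteq> a) ys)"
      using that by (simp add: ys_def filter_takeWhile_neq)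
    finally show ?thesis using ys(2) by (simp add: ahead_def distinct_card)
  qed
  then have "{a \<in> S. ahead xs S a < q} = {a \<in> set ys. length (takeWhile (\<lambda>x. x \<noteq> a) ys) < q}"
    using ys(1) by auto
  also have "\<dots> = set (take q ys)"
    using set_take_eq_takeWhile_less[OF ys(2)] .
  finally show ?thesis
    using ys assms(3) distinct_card[OF ys(2)] distinct_card[of "take q ys"] by simp
qed

lemma props_snoc [simp]:
  "props [] = {}"
  "props (s @ [PropE r h]) = insert (r,h) (props s)"
  "props (s @ [RejE r h]) = props s"
  by (auto simp: props_def)

lemma rejs_snoc [simp]:
  "rejs [] = {}"
  "rejs (s @ [PropE r h]) = rejs s"
  "rejs (s @ [RejE r h]) = insert (r,h) (rejs s)"
  by (auto simp: rejs_def)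

lemma ousted_mono:
  assumes "ousted K M r h" "M \<subseteq> M'"
  shows "ousted K M' r h"
proof -
  have "card (set xs \<inter> res_h M h) \<le> card (set xs \<inter> res_h M' h)" for xs :: "'a list"
    using assms(2) by (intro card_mono) (auto simp: res_h_def)
  then show ?thesis using assms unfolding ousted_def by (meson le_trans subsetD)
qed

lemma ousted_iff_ahead:
  assumes "res_h M h \<subseteq> set (hlist K h)"
  shows "ousted K M r h \<longleftrightarrow> r \<in> res_h M h \<and> quota K h \<le> card (res_h M h)
           \<and> quota K h \<le> ahead (hlist K h) (res_h M h) r"
proof -
  have listed: "set (hlist K h) \<inter> res_h M h = res_h M h" using assms by blast
  have "(r,h) \<in> M \<longleftrightarrow> r \<in> res_h M h" by (simp add: res_h_def)
  then show ?thesis using assms unfolding ousted_def ahead_def[symmetric] listed by blast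
qed

lemma set_takeWhile_subset_append: "set (takeWhile P xs) \<subseteq> set (takeWhile P (xs @ ys))"
  by (induction xs) auto

lemma ousted_extension:
  assumes "ousted I M r h" "prefix (hlist I h) (hlist J h)" "quota J = quota I"
  shows "ousted J M r h"
proof -
  obtain zs where J: "hlist J h = hlist I h @ zs" using assms(2) by (auto simp: prefix_def)
  have listed: "card (set (hlist I h) \<inter> res_h M h) \<le> card (set (hlist J h) \<inter> res_h M h)"
    by (rule card_mono) (auto simp: J)
  have "set (takeWhile (\<lambda>x. x \<noteq> r) (hlist I h)) \<subseteq> set (takeWhile (\<lambda>x. x \<noteq> r) (hlist J h))"
    unfolding J by (rule set_takeWhile_subset_append)
  then have ahead: "ahead (hlist I h) (res_h M h) r \<le> ahead (hlist J h) (res_h M h) r"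
    unfolding ahead_def by (intro card_mono) auto
  have unlisted: "card (set (hlist I h) \<inter> res_h M h) \<le> ahead (hlist J h) (res_h M h) r"
    if "r \<notin> set (hlist I h)"
  proof -
    have "takeWhile (\<lambda>x. x \<noteq> r) (hlist J h) = hlist I h @ takeWhile (\<lambda>x. x \<noteq> r) zs"
      unfolding J by (rule takeWhile_append2) (use that in auto)
    then show ?thesis unfolding ahead_def by (intro card_mono) auto
  qed
  have I: "(r,h) \<in> M" "quota I h \<le> card (set (hlist I h) \<inter> res_h M h)"
    "r \<notin> set (hlist I h) \<or> quota I h \<le> ahead (hlist I h) (res_h M h) r"
    using assms(1) unfolding ousted_def ahead_def by auto
  then have "quota I h \<le> ahead (hlist J h) (res_h M h) r"
    using ahead unlisted by (auto intro: le_trans)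
  then show ?thesis
    using I(1,2) listed assms(3) unfolding ousted_def ahead_def[symmetric] by auto
qed

definition run_invariant :: "('r,'h) inst \<Rightarrow> ('r,'h) event list \<Rightarrow> bool" where
  "run_invariant K s \<longleftrightarrow> distinct s \<and> rejs s \<subseteq> props s
    \<and> (\<forall>(r,h)\<in>props s. r \<in> Res K \<and> h \<in> Hos K \<and> h \<in> set (rlist K r)
         \<and> (\<forall>h'. precedes (rlist K r) h' h \<longrightarrow> (r,h') \<in> rejs s))
    \<and> (\<forall>(r,h)\<in>rejs s. ousted K (props s) r h)"

lemma feasible_run_invariant: "feasible K s \<Longrightarrow> run_invariant K s"
proof (induction rule: feasible.induct)
  case feas_Nil
  then show ?case by (simp add: run_invariant_def)
next
  case (feas_Prop \<sigma> r h)
  have "PropE r h \<notin> set \<sigma>" using feas_Prop.hyps(5) by (auto simp: props_def)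
  moreover have "ousted K (insert (r,h) (props \<sigma>)) r' h'" if "(r',h') \<in> rejs \<sigma>" for r' h'
    using feas_Prop.IH that by (auto simp: run_invariant_def intro: ousted_mono)
  ultimately show ?case using feas_Prop by (auto simp: run_invariant_def)
next
  case (feas_Rej \<sigma> r h)
  have "RejE r h \<notin> set \<sigma>" using feas_Rej.hyps(3) by (auto simp: rejs_def)
  moreover have "(r,h) \<in> props \<sigma>" using feas_Rej.hyps(2) by (simp add: ousted_def)
  ultimately show ?case using feas_Rej by (auto simp: run_invariant_def)
qed

lemma maximal_feasible_exists:
  assumes "finite (Res K)" "finite (Hos K)"
  shows "\<exists>s. maximal_feasible K s"
proof -
  define E where
    "E = (\<lambda>(r,h). PropE r h) ` (Res K \<times> Hos K) \<union> (\<lambda>(r,h). RejE r h) ` (Res K \<times> Hos K)"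
  have "length s \<le> card E" if "feasible K s" for s
  proof -
    have inv: "run_invariant K s" using feasible_run_invariant[OF that] .
    have "set s \<subseteq> E"
    proof
      fix e assume e: "e \<in> set s"
      show "e \<in> E"
      proof (cases e)
        case (PropE r h)
        then have "(r,h) \<in> props s" using e by (simp add: props_def)
        then show ?thesis using inv PropE by (auto simp: E_def run_invariant_def)
      next
        case (RejE r h)
        then have "(r,h) \<in> props s" using e inv by (auto simp: rejs_def run_invariant_def)
        then show ?thesis using inv RejE by (auto simp: E_def run_invariant_def)
      qed
    qed
    then have "card (set s) \<le> card E" using assms by (intro card_mono) (simp_all add: E_def)
    then show ?thesis using inv by (simp add: run_invariant_def distinct_card)
  qed
  then obtain n where "\<exists>s. feasible K s \<and> length s = n"
    and longest: "\<forall>m. (\<exists>s. feasible K s \<and> length s = m) \<longrightarrow> m \<le> n"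
    \<comment> \<open>qualified: Lattices_Big has a different lemma of the same name\<close>
    using Nat.ex_has_greatest_nat[where P = "\<lambda>n. \<exists>s. feasible K s \<and> length s = n"
        and k = 0 and b = "card E"] feasible.feas_Nil
    by auto
  then obtain s where "feasible K s" "length s = n" by blast
  moreover have "\<not> feasible K (s @ [e])" for e
    using longest \<open>length s = n\<close> by fastforce
  ultimately show ?thesis by (auto simp: maximal_feasible_def)
qed

lemma maximal_feasible_SOME: "wf_inst K \<Longrightarrow> maximal_feasible K (SOME s. maximal_feasible K s)"
  using maximal_feasible_exists someI_ex unfolding wf_inst_def by metis

lemma wf_inst_distinct:
  assumes "wf_inst K"
  shows "r \<in> Res K \<Longrightarrow> distinct (rlist K r)" "h \<in> Hos K \<Longrightarrow> distinct (hlist K h)"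
  using assms by (simp_all add: wf_inst_def)

lemma feasible_extension:
  assumes "feasible I s" "is_extension J I" "wf_inst J"
  shows "feasible J s"
  using assms(1)
proof (induction rule: feasible.induct)
  case feas_Nil
  then show ?case by (rule feasible.feas_Nil)
next
  case (feas_Prop \<sigma> r h)
  have ext: "Res J = Res I" "Hos J = Hos I" "prefix (rlist I r) (rlist J r)"
    using assms(2) feas_Prop.hyps(2) by (auto simp: is_extension_def)
  have "distinct (rlist J r)" using wf_inst_distinct(1)[OF assms(3)] feas_Prop.hyps(2) ext(1) by simp
  then have "precedes (rlist J r) h' h \<longleftrightarrow> precedes (rlist I r) h' h" for h'
    using precedes_prefix_iff[OF ext(3)] feas_Prop.hyps(6) by blast
  moreover have "h \<in> set (rlist J r)" using ext(3) feas_Prop.hyps(6) set_mono_prefix by blast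
  ultimately show ?case
    using feasible.feas_Prop[OF feas_Prop.IH, of r h] feas_Prop.hyps(2-7) ext(1,2) by simp
next
  case (feas_Rej \<sigma> r h)
  have "(r,h) \<in> props \<sigma>" using feas_Rej.hyps(2) by (simp add: ousted_def)
  then have "h \<in> Hos I"
    using feasible_run_invariant[OF feas_Rej.hyps(1)] by (auto simp: run_invariant_def)
  then have "ousted J (props \<sigma>) r h"
    using assms(2) ousted_extension[OF feas_Rej.hyps(2)] by (auto simp: is_extension_def)
  then show ?case using feasible.feas_Rej[OF feas_Rej.IH] feas_Rej.hyps(3) by blast
qed

lemma maximal_feasible_rejs_iff:
  assumes "maximal_feasible K t"
  shows "(r,h) \<in> rejs t \<longleftrightarrow> ousted K (props t) r h"
proof
  have "run_invariant K t" using assms by (simp add: maximal_feasible_def feasible_run_invariant)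
  then show "(r,h) \<in> rejs t \<Longrightarrow> ousted K (props t) r h"
    by (auto simp: run_invariant_def)
next
  assume ousted: "ousted K (props t) r h"
  show "(r,h) \<in> rejs t"
  proof (rule ccontr)
    assume fresh: "(r,h) \<notin> rejs t"
    have "feasible K t" using assms by (simp add: maximal_feasible_def)
    then have "feasible K (t @ [RejE r h])" by (rule feasible.feas_Rej[OF _ ousted fresh])
    then show False using assms by (simp add: maximal_feasible_def)
  qed
qed

lemma feasible_subset_maximal:
  assumes "feasible K s" "maximal_feasible K t"
  shows "props s \<subseteq> props t \<and> rejs s \<subseteq> rejs t"
  using assms(1)
proof (induction rule: feasible.induct)
  case feas_Nil
  then show ?case by simp
next
  case (feas_Prop \<sigma> r h)
  have t: "feasible K t" "\<And>e. \<not> feasible K (t @ [e])" and inv: "run_invariant K t"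
    using assms(2) feasible_run_invariant by (auto simp: maximal_feasible_def)
  have earlier_rejected: "\<forall>h'. precedes (rlist K r) h' h \<longrightarrow> (r,h') \<in> rejs t"
    using feas_Prop by blast
  have "(r,h) \<in> props t"
  proof (rule ccontr)
    assume new: "(r,h) \<notin> props t"
    have "r \<notin> res (tents t)"
    proof
      assume "r \<in> res (tents t)"
      then obtain h'' where h'': "(r,h'') \<in> props t" "(r,h'') \<notin> rejs t"
        by (auto simp: res_def tents_def)
      then have listed: "h'' \<in> set (rlist K r)"
        and before_h'': "\<forall>h'. precedes (rlist K r) h' h'' \<longrightarrow> (r,h') \<in> rejs t"
        using inv unfolding run_invariant_def by blast+
      have "h'' \<noteq> h" using h'' new by blast
      then consider "precedes (rlist K r) h'' h" | "precedes (rlist K r) h h''"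
        using precedes_total[OF listed feas_Prop.hyps(6)] by blast
      then show False
      proof cases
        case 1
        then show False using earlier_rejected h''(2) by blast
      next
        case 2
        then have "(r,h) \<in> rejs t" using before_h'' by blast
        then show False using new inv unfolding run_invariant_def by blast
      qed
    qed
    then have "feasible K (t @ [PropE r h])"
      using feasible.feas_Prop[OF t(1) feas_Prop.hyps(2,3) _ new feas_Prop.hyps(6) earlier_rejected]
      by blast
    then show False using t(2) by blast
  qed
  then show ?case using feas_Prop.IH by simp
next
  case (feas_Rej \<sigma> r h)
  have "ousted K (props t) r h"
    using ousted_mono[OF feas_Rej.hyps(2)] feas_Rej.IH by blast
  then have "(r,h) \<in> rejs t" using maximal_feasible_rejs_iff[OF assms(2)] by blast
  then show ?case using feas_Rej.IH by simp
qed

lemma tentI_eq: "tentI K = propI K - rejI K"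
  by (simp add: tentI_def propI_def rejI_def tents_def)

lemma maximal_run_propI_rejI:
  assumes "wf_inst K"
  obtains s where "maximal_feasible K s" "propI K = props s" "rejI K = rejs s"
  using maximal_feasible_SOME[OF assms] unfolding propI_def rejI_def by blast

lemma run_invariant_propI_rejI:
  assumes "wf_inst K"
  shows "rejI K \<subseteq> propI K"
    and "\<forall>(r,h)\<in>propI K. r \<in> Res K \<and> h \<in> Hos K \<and> h \<in> set (rlist K r)
           \<and> (\<forall>h'. precedes (rlist K r) h' h \<longrightarrow> (r,h') \<in> rejI K)"
proof -
  obtain s where s: "maximal_feasible K s" "propI K = props s" "rejI K = rejs s"
    using maximal_run_propI_rejI[OF assms] .
  then have "run_invariant K s" by (simp add: maximal_feasible_def feasible_run_invariant)
  then show "rejI K \<subseteq> propI K"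
    and "\<forall>(r,h)\<in>propI K. r \<in> Res K \<and> h \<in> Hos K \<and> h \<in> set (rlist K r)
           \<and> (\<forall>h'. precedes (rlist K r) h' h \<longrightarrow> (r,h') \<in> rejI K)"
    unfolding run_invariant_def s(2,3) by blast+
qed

lemmas rejI_subset_propI = run_invariant_propI_rejI(1)

lemma propI_D:
  assumes "wf_inst K" "(r,h) \<in> propI K"
  shows "r \<in> Res K" "h \<in> Hos K" "h \<in> set (rlist K r)"
    and "precedes (rlist K r) h' h \<Longrightarrow> (r,h') \<in> rejI K"
  using run_invariant_propI_rejI(2)[OF assms(1)] assms(2) by auto

lemma rejI_iff_ousted: "wf_inst K \<Longrightarrow> (r,h) \<in> rejI K \<longleftrightarrow> ousted K (propI K) r h"
  by (metis maximal_run_propI_rejI maximal_feasible_rejs_iff)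

lemma extension_propI_rejI_mono:
  assumes "is_extension J I" "wf_inst I" "wf_inst J"
  shows "propI I \<subseteq> propI J" "rejI I \<subseteq> rejI J"
proof -
  obtain s where s: "maximal_feasible I s" "propI I = props s" "rejI I = rejs s"
    using maximal_run_propI_rejI[OF assms(2)] .
  obtain t where t: "maximal_feasible J t" "propI J = props t" "rejI J = rejs t"
    using maximal_run_propI_rejI[OF assms(3)] .
  have "feasible J s"
    using feasible_extension[of I s J] s(1) assms(1,3) by (simp add: maximal_feasible_def)
  then show "propI I \<subseteq> propI J" "rejI I \<subseteq> rejI J"
    using feasible_subset_maximal[OF _ t(1)] s(2,3) t(2,3) by simp_all
qed

lemma tentI_at_hospital:
  assumes "wf_inst K" "h \<in> Hos K" and listed: "res_h (propI K) h \<subseteq> set (hlist K h)"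
  shows "card (res_h (tentI K) h) \<le> quota K h"
    and "res_h (rejI K) h \<noteq> {} \<Longrightarrow> card (res_h (tentI K) h) = quota K h"
    and "r \<in> res_h (tentI K) h \<Longrightarrow> r' \<in> res_h (rejI K) h \<Longrightarrow> precedes (hlist K h) r r'"
proof -
  define S where "S = res_h (propI K) h"
  define xs where "xs = hlist K h"
  define q where "q = quota K h"
  have xs: "distinct xs" "S \<subseteq> set xs"
    using wf_inst_distinct(2)[OF assms(1,2)] listed unfolding S_def xs_def by simp_all
  have rej: "res_h (rejI K) h = {r \<in> S. q \<le> card S \<and> q \<le> ahead xs S r}"
    using rejI_iff_ousted[OF assms(1)] ousted_iff_ahead[OF listed]
    unfolding S_def xs_def q_def by (auto simp: res_h_def)
  have tent: "res_h (tentI K) h = S - res_h (rejI K) h"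
    unfolding S_def by (auto simp: tentI_eq res_h_def)
  have full: "card (res_h (tentI K) h) = q" if "q \<le> card S"
  proof -
    have "res_h (tentI K) h = {r \<in> S. ahead xs S r < q}" using that tent rej by auto
    then show ?thesis using card_ahead_less[OF xs that] by simp
  qed
  show "card (res_h (tentI K) h) \<le> quota K h"
  proof (cases "q \<le> card S")
    case False
    have "finite S" using xs(2) finite_subset by blast
    then show ?thesis using False tent card_mono[of S "res_h (tentI K) h"] q_def by auto
  qed (simp add: full q_def)
  show "res_h (rejI K) h \<noteq> {} \<Longrightarrow> card (res_h (tentI K) h) = quota K h"
    using full rej q_def by auto
  show "precedes (hlist K h) r r'" if "r \<in> res_h (tentI K) h" "r' \<in> res_h (rejI K) h"
    using precedes_if_ahead_less[OF xs(1), of r' S r] that tent rej xs(2)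
    unfolding xs_def by auto
qed

lemma simple_extension_new_proposals_unique:
  assumes "wf_inst I" "wf_inst J" "simple_extension J I"
    and "(r,h) \<in> propI J - propI I" "(r,h') \<in> propI J - propI I"
  shows "h = h'"
proof -
  have simple: "(propI J - propI I) \<inter> (rejI J - rejI I) = {}"
    using assms(3) by (simp add: simple_extension_def)
  have no_new_rejection: False
    if a: "(r,a) \<in> propI J - propI I" and b: "(r,b) \<in> propI J - propI I"
      and ab: "precedes (rlist J r) a b" for a b
  proof -
    have "(r,a) \<in> rejI J" using propI_D(4)[OF assms(2) DiffD1[OF b] ab] .
    moreover have "(r,a) \<notin> rejI I" using a rejI_subset_propI[OF assms(1)] by blast
    ultimately have "(r,a) \<in> (propI J - propI I) \<inter> (rejI J - rejI I)" using a by blast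
    then show False using simple by blast
  qed
  show ?thesis
  proof (rule ccontr)
    assume "h \<noteq> h'"
    have "h \<in> set (rlist J r)" "h' \<in> set (rlist J r)"
      using propI_D(3)[OF assms(2) DiffD1[OF assms(4)]] propI_D(3)[OF assms(2) DiffD1[OF assms(5)]] .
    then consider "precedes (rlist J r) h h'" | "precedes (rlist J r) h' h"
      using precedes_total \<open>h \<noteq> h'\<close> by metis
    then show False
      using no_new_rejection[OF assms(4,5)] no_new_rejection[OF assms(5,4)] by cases
  qed
qed

lemma simple_extension_new_rejections_tentative:
  assumes "wf_inst J" "simple_extension J I"
  shows "rejI J - rejI I \<subseteq> tentI I"
proof -
  have "(propI J - propI I) \<inter> (rejI J - rejI I) = {}"
    using assms(2) by (simp add: simple_extension_def)
  then show ?thesis using rejI_subset_propI[OF assms(1)] unfolding tentI_eq by blast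
qed

lemma simple_extension_tentI_eq:
  assumes "wf_inst I" "wf_inst J" "simple_extension J I"
  shows "(propI J - propI I) \<union> (tentI I - (rejI J - rejI I)) = tentI J"
proof -
  have "(propI J - propI I) \<inter> (rejI J - rejI I) = {}" "is_extension J I"
    using assms(3) by (simp_all add: simple_extension_def)
  then show ?thesis
    using extension_propI_rejI_mono[of J I] assms(1,2) rejI_subset_propI[OF assms(1)]
    unfolding tentI_eq by blast
qed

lemma resident_minimal_new_proposal_rejects_tentative:
  assumes "wf_inst J" "is_extension J I" "resident_minimal I"
    and "(r,h) \<in> propI J - propI I" "(r,h') \<in> tentI I"
  shows "(r,h') \<in> rejI J - rejI I"
proof -
  have r: "r \<in> Res J" "h \<in> set (rlist J r)"
    using propI_D(1,3)[OF assms(1) DiffD1[OF assms(4)]] .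
  have ext: "Res J = Res I" "prefix (rlist I r) (rlist J r)"
    using assms(2) r(1) by (simp_all add: is_extension_def)
  have "propI I = {(r,h). r \<in> Res I \<and> h \<in> set (rlist I r)}"
    using assms(3) by (simp add: resident_minimal_def)
  then have "h \<notin> set (rlist I r)" "h' \<in> set (rlist I r)"
    using assms(4,5) r(1) ext(1) unfolding tentI_eq by blast+
  then have "precedes (rlist J r) h' h"
    using precedes_beyond_prefix[OF ext(2) wf_inst_distinct(1)[OF assms(1) r(1)]] r(2) by blast
  then have "(r,h') \<in> rejI J" using propI_D(4)[OF assms(1) DiffD1[OF assms(4)]] by blast
  then show ?thesis using assms(5) unfolding tentI_eq by blast
qed

lemma extension_tentI_at_hospital:
  assumes "wf_inst J" "is_extension J I" "hospital_complete I" "h \<in> Hos I"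
  shows "card (res_h (tentI J) h) \<le> quota I h"
    and "res_h (rejI J) h \<noteq> {} \<Longrightarrow> card (res_h (tentI J) h) = quota I h"
    and "r \<in> res_h (tentI J) h \<Longrightarrow> r' \<in> res_h (rejI J) h \<Longrightarrow> precedes (hlist I h) r r'"
proof -
  have ext: "Res J = Res I" "Hos J = Hos I" "quota J = quota I" "prefix (hlist I h) (hlist J h)"
    using assms(2,4) by (auto simp: is_extension_def)
  have complete: "set (hlist I h) = Res I" using assms(3,4) by (simp add: hospital_complete_def)
  have "res_h (propI J) h \<subseteq> set (hlist I h)"
    using propI_D(1)[OF assms(1)] ext(1) complete by (auto simp: res_h_def)
  then have listed: "res_h (propI J) h \<subseteq> set (hlist J h)"
    using set_mono_prefix[OF ext(4)] by blast
  note at_h = tentI_at_hospital[OF assms(1) assms(4)[folded ext(2)] listed]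
  show "card (res_h (tentI J) h) \<le> quota I h"
    and "res_h (rejI J) h \<noteq> {} \<Longrightarrow> card (res_h (tentI J) h) = quota I h"
    using at_h(1,2) ext(3) by simp_all
  assume "r \<in> res_h (tentI J) h" "r' \<in> res_h (rejI J) h"
  moreover have "r' \<in> set (hlist I h)"
    using \<open>res_h (propI J) h \<subseteq> set (hlist I h)\<close> calculation(2) rejI_subset_propI[OF assms(1)]
    by (auto simp: res_h_def)
  moreover have "distinct (hlist J h)" using wf_inst_distinct(2)[OF assms(1)] assms(4) ext(2) by simp
  ultimately show "precedes (hlist I h) r r'"
    using at_h(3) precedes_prefix_iff[OF ext(4)] by blast
qed

theorem proposition6:
  fixes I J :: "('r,'h) inst"
  assumes "wf_inst I" and "wf_inst J"
    and "resident_minimal I" and "hospital_complete I"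
    and "simple_extension J I"
  defines "P \<equiv> propI J - propI I"
    and "X \<equiv> rejI J - rejI I"
  shows "P \<inter> propI I = {}
    \<and> (\<forall>r\<in>Res I. \<forall>h\<in>Hos I. \<forall>h'\<in>Hos I. (r,h) \<in> P \<and> (r,h') \<in> P \<longrightarrow> h = h')
    \<and> X \<subseteq> tentI I
    \<and> res P \<inter> res (tentI I) \<subseteq> res X
    \<and> (\<forall>h\<in>Hos I. card (res_h (P \<union> (tentI I - X)) h) \<le> quota I h
            \<and> (res_h X h \<noteq> {} \<longrightarrow> card (res_h (P \<union> (tentI I - X)) h) = quota I h))
    \<and> (\<forall>h\<in>Hos I. \<forall>r\<in>res_h (P \<union> (tentI I - X)) h. \<forall>r'\<in>res_h X h.
            precedes (hlist I h) r r')"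
proof -
  have ext: "is_extension J I" using assms(5) by (simp add: simple_extension_def)
  have tentJ: "P \<union> (tentI I - X) = tentI J"
    unfolding P_def X_def using simple_extension_tentI_eq assms(1,2,5) .
  have XJ: "res_h X h \<subseteq> res_h (rejI J) h" for h by (auto simp: X_def res_h_def)
  have "res P \<inter> res (tentI I) \<subseteq> res X"
    using resident_minimal_new_proposal_rejects_tentative[OF assms(2) ext assms(3)]
    unfolding P_def X_def res_def by blast
  moreover have "\<forall>h\<in>Hos I. card (res_h (P \<union> (tentI I - X)) h) \<le> quota I h
            \<and> (res_h X h \<noteq> {} \<longrightarrow> card (res_h (P \<union> (tentI I - X)) h) = quota I h)"
    using extension_tentI_at_hospital(1,2)[OF assms(2) ext assms(4)] XJ
    unfolding tentJ by blast
  moreover have "\<forall>h\<in>Hos I. \<forall>r\<in>res_h (P \<union> (tentI I - X)) h. \<forall>r'\<in>res_h X h.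
            precedes (hlist I h) r r'"
    using extension_tentI_at_hospital(3)[OF assms(2) ext assms(4)] XJ
    unfolding tentJ by blast
  ultimately show ?thesis
    using simple_extension_new_proposals_unique[OF assms(1,2,5)]
      simple_extension_new_rejections_tentative[OF assms(2,5)]
    unfolding P_def X_def by blast
qed

end
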